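(* Let $n \geqslant 19$ be an integer, and let $T_n$ be the Transposition graph, i.e. the Cayley graph $\mathrm{Cay}(\mathrm{Sym}_n, T)$ where $T$ is the set of all transpositions of $\mathrm{Sym}_n$. Then every integer $m$ with $-\frac{n-4}{2} \leqslant m \leqslant \frac{n-4}{2}$ is an eigenvalue of (the adjacency matrix of) $T_n$.
   Context: $\mathrm{Sym}_n$ is the symmetric group on $n$ letters. The Cayley graph $\mathrm{Cay}(G,S)$ has vertex set $G$, with $g$ adjacent to $gs$ for $s\in S$. The spectrum of $T_n$ is the set of eigenvalues of its adjacency matrix. *)

theory Defs
  imports "HOL-Combinatorics.Combinatorics" Complex_Main
begin

definition Sym :: "nat \<Rightarrow> (nat \<Rightarrow> nat) set" where
  "Sym n = {p. p permutes {0..<n}}"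

definition transpositions :: "nat \<Rightarrow> (nat \<Rightarrow> nat) set" where
  "transpositions n = {transpose a b | a b. a < n \<and> b < n \<and> a \<noteq> b}"

definition cayley_adj :: "('a \<Rightarrow> 'a) set \<Rightarrow> ('a \<Rightarrow> 'a) \<Rightarrow> ('a \<Rightarrow> 'a) \<Rightarrow> real" where
  "cayley_adj S g h = (if \<exists>s\<in>S. h = g \<circ> s then 1 else 0)"

definition is_eigenvalue :: "'v set \<Rightarrow> ('v \<Rightarrow> 'v \<Rightarrow> real) \<Rightarrow> real \<Rightarrow> bool" where
  "is_eigenvalue V A mu \<longleftrightarrow>
     (\<exists>x :: 'v \<Rightarrow> real. (\<exists>v\<in>V. x v \<noteq> 0) \<and> (\<forall>u\<in>V. (\<Sum>w\<in>V. A u w * x w) = mu * x u))"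

end

theory Submission
  imports Defs "HOL-Computational_Algebra.Polynomial"
begin

(* The Specht polynomial of a Young tableau with column sets C_1, ..., C_r, evaluated at the point
   (g(0), ..., g(n-1)), is an eigenvector of the transposition graph whose eigenvalue is the content
   sum of the diagram; multiplying it by sign g negates the eigenvalue. A transposition inside a
   column negates the polynomial, and by Lagrange interpolation the transpositions between two
   columns of lengths p and q together contribute min p q times it. It remains to find, for every
   0 <= k <= (n - 4)/2, a partition of n with content sum k: at most three hooks in Frobenius
   coordinates suffice, combining symmetric hooks (x, x) of content 0 with the hook (k, k - 1)
   of content k. *)

section \<open>Lagrange interpolation and Vandermonde products\<close>

lemma lagrange_interpolation:
  fixes x :: "'a \<Rightarrow> 'b::field" and q :: "'b poly"
  assumes C: "finite C" and inj: "inj_on x C" and deg: "degree q < card C"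
  shows "(\<Sum>a\<in>C. (\<Prod>m\<in>C - {a}. (z - x m) / (x a - x m)) * poly q (x a)) = poly q z"
proof -
  define L where "L = (\<Sum>a\<in>C. smult (poly q (x a) / (\<Prod>m\<in>C - {a}. x a - x m))
                                    (\<Prod>m\<in>C - {a}. [:- x m, 1:]))"
  have poly_L: "poly L w = (\<Sum>a\<in>C. (\<Prod>m\<in>C - {a}. (w - x m) / (x a - x m)) * poly q (x a))" for w
    by (simp add: L_def poly_sum poly_prod prod_dividef ac_simps)
  have "degree L \<le> card C - 1"
    unfolding L_def
  proof (intro degree_sum_le C order.trans[OF degree_smult_le])
    fix a assume "a \<in> C"
    with C show "degree (\<Prod>m\<in>C - {a}. [:- x m, 1:]) \<le> card C - 1"
      by (simp add: degree_prod_eq_sum_degree)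
  qed
  with deg have deg_L: "degree L < card C"
    by linarith
  have "poly L (x k) = poly q (x k)" if k: "k \<in> C" for k
  proof -
    have "(\<Prod>m\<in>C - {a}. (x k - x m) / (x a - x m)) * poly q (x a) =
        (if a = k then poly q (x k) else 0)" if "a \<in> C" for a
    proof (cases "a = k")
      case True
      have "(\<Prod>m\<in>C - {k}. (x k - x m) / (x k - x m)) = 1"
        by (rule prod.neutral) (use inj k in \<open>auto simp: inj_on_eq_iff\<close>)
      with True show ?thesis
        by simp
    next
      case False
      with C k show ?thesis
        by (auto intro!: prod_zero bexI[of _ k])
    qed
    then have "poly L (x k) = (\<Sum>a\<in>C. if a = k then poly q (x k) else 0)"
      unfolding poly_L by (rule sum.cong[OF refl])
    with C k show ?thesis
      by simp
  qed
  with deg deg_L inj have "L = q"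
    by (intro poly_eqI_degree[of "x ` C"]) (auto simp: card_image)
  then show ?thesis
    using poly_L[of z] by simp
qed

definition vandermonde :: "'a::linorder set \<Rightarrow> ('a \<Rightarrow> 'b::comm_ring_1) \<Rightarrow> 'b" where
  "vandermonde S x = (\<Prod>(k, l)\<in>{(k, l)\<in>S \<times> S. k < l}. x k - x l)"

lemma vandermonde_cong:
  "(\<And>k. k \<in> S \<Longrightarrow> x k = y k) \<Longrightarrow> vandermonde S x = vandermonde S y"
  unfolding vandermonde_def by (intro prod.cong) auto

lemma vandermonde_remove:
  assumes "finite S" and a: "a \<in> S"
  shows "vandermonde S x =
    vandermonde (S - {a}) x * (\<Prod>m\<in>S - {a}. if m < a then x m - x a else x a - x m)"
proof -
  let ?P = "\<lambda>S. {(k, l)\<in>S \<times> S. k < l}"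
  let ?f = "\<lambda>(k, l). x k - x l"
  let ?pair = "\<lambda>m. if m < a then (m, a) else (a, m)"
  have finite_P: "finite (?P (S - {a}))"
    using assms by (auto intro: finite_subset[of _ "S \<times> S"])
  have "?P S = ?P (S - {a}) \<union> ?pair ` (S - {a})"
    using a by (auto simp: image_iff split: if_splits)
  moreover have "?P (S - {a}) \<inter> ?pair ` (S - {a}) = {}"
    by auto
  moreover have "inj_on ?pair (S - {a})"
    by (auto simp: inj_on_def split: if_splits)
  ultimately have "vandermonde S x = vandermonde (S - {a}) x * prod (?f \<circ> ?pair) (S - {a})"
    using assms finite_P by (simp add: vandermonde_def prod.union_disjoint prod.reindex del: if_image_distrib)
  also have "prod (?f \<circ> ?pair) (S - {a}) = (\<Prod>m\<in>S - {a}. if m < a then x m - x a else x a - x m)"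
    by (intro prod.cong) auto
  finally show ?thesis .
qed

lemma vandermonde_fun_upd:
  assumes "finite S" and "a \<in> S"
  shows "vandermonde S (x(a := t)) =
    vandermonde (S - {a}) x * (\<Prod>m\<in>S - {a}. (if m < a then - 1 else 1) * (t - x m))"
proof -
  have "vandermonde S (x(a := t)) = vandermonde (S - {a}) (x(a := t)) *
      (\<Prod>m\<in>S - {a}. if m < a then (x(a := t)) m - (x(a := t)) a else (x(a := t)) a - (x(a := t)) m)"
    by (rule vandermonde_remove[OF assms])
  also have "vandermonde (S - {a}) (x(a := t)) = vandermonde (S - {a}) x"
    by (rule vandermonde_cong) simp
  also have "(\<Prod>m\<in>S - {a}. if m < a then (x(a := t)) m - (x(a := t)) a else (x(a := t)) a - (x(a := t)) m) =
      (\<Prod>m\<in>S - {a}. (if m < a then - 1 else 1) * (t - x m))"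
    by (intro prod.cong) auto
  finally show ?thesis .
qed

lemma vandermonde_fun_upd_poly:
  assumes "finite S" and "a \<in> S"
  obtains p where "degree p < card S" and "\<And>t. vandermonde S (x(a := t)) = poly p t"
proof
  let ?c = "vandermonde (S - {a}) x * (\<Prod>m\<in>S - {a}. if m < a then - 1 else 1)"
  show "vandermonde S (x(a := t)) = poly (smult ?c (\<Prod>m\<in>S - {a}. [:- x m, 1:])) t" for t
    using assms by (simp add: vandermonde_fun_upd poly_prod prod.distrib mult.assoc)
  have "degree (smult ?c (\<Prod>m\<in>S - {a}. [:- x m, 1:])) \<le> card (S - {a})"
    using assms by (intro order.trans[OF degree_smult_le] order.trans[OF degree_prod_sum_le]) simp_all
  also have "\<dots> < card S"
    by (rule card_Diff1_less[OF assms])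
  finally show "degree (smult ?c (\<Prod>m\<in>S - {a}. [:- x m, 1:])) < card S" .
qed

lemma vandermonde_fun_upd_ratio:
  fixes x :: "'a::linorder \<Rightarrow> 'b::field"
  assumes "finite S" and "a \<in> S" and inj: "inj_on x S"
  shows "vandermonde S (x(a := t)) = vandermonde S x * (\<Prod>m\<in>S - {a}. (t - x m) / (x a - x m))"
proof -
  have "(\<Prod>m\<in>S - {a}. x a - x m) \<noteq> 0"
    using assms by (auto simp: inj_on_eq_iff)
  then show ?thesis
    using vandermonde_fun_upd[OF assms(1,2), of x t] vandermonde_fun_upd[OF assms(1,2), of x "x a"]
    by (simp add: prod.distrib prod_dividef)
qed

lemma vandermonde_swap:
  assumes "finite S" and a: "a \<in> S" and b: "b \<in> S" and "a \<noteq> b"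
  shows "vandermonde S (x \<circ> transpose a b) = - vandermonde S x"
proof -
  let ?R = "S - {a} - {b}"
  let ?\<sigma> = "\<lambda>y m c. if m < c then y m - y c else y c - y m"
  have expand: "vandermonde S y = vandermonde ?R y * ?\<sigma> y b a * (\<Prod>m\<in>?R. ?\<sigma> y m b * ?\<sigma> y m a)" for y
  proof -
    have "b \<in> S - {a}"
      using assms by auto
    then show ?thesis
      using assms vandermonde_remove[of S a y] vandermonde_remove[of "S - {a}" b y]
        prod.remove[of "S - {a}" b "\<lambda>m. ?\<sigma> y m a"]
      by (simp add: prod.distrib mult_ac)
  qed
  have "vandermonde ?R (x \<circ> transpose a b) = vandermonde ?R x"
    by (rule vandermonde_cong) simp
  moreover have "?\<sigma> (x \<circ> transpose a b) b a = - ?\<sigma> x b a"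
    by simp
  moreover have "(\<Prod>m\<in>?R. ?\<sigma> (x \<circ> transpose a b) m b * ?\<sigma> (x \<circ> transpose a b) m a) =
      (\<Prod>m\<in>?R. ?\<sigma> x m b * ?\<sigma> x m a)"
    by (intro prod.cong) (auto simp: algebra_simps)
  ultimately show ?thesis
    using expand[of x] expand[of "x \<circ> transpose a b"] by simp
qed

lemma vandermonde_nonzero:
  fixes x :: "'a::linorder \<Rightarrow> 'b::idom"
  assumes "finite S" and "inj_on x S"
  shows "vandermonde S x \<noteq> 0"
proof -
  have "finite {(k, l)\<in>S \<times> S. k < l}"
    using assms by (auto intro: finite_subset[of _ "S \<times> S"])
  with assms show ?thesis
    by (auto simp: vandermonde_def inj_on_eq_iff)
qed

(* Replacing x a by t multiplies vandermonde C x by the Lagrange basis polynomial of the node x a,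
   evaluated at t, while vandermonde D (x(b := t)) is a polynomial in t of degree < card C. *)
lemma sum_vandermonde_exchange:
  fixes x :: "'a::linorder \<Rightarrow> 'b::field"
  assumes C: "finite C" and D: "finite D" and "b \<in> D" and "card D \<le> card C" and inj: "inj_on x C"
  shows "(\<Sum>a\<in>C. vandermonde C (x(a := x b)) * vandermonde D (x(b := x a))) =
    vandermonde C x * vandermonde D x"
proof -
  obtain p where deg: "degree p < card D" and p: "\<And>t. vandermonde D (x(b := t)) = poly p t"
    using vandermonde_fun_upd_poly[OF D \<open>b \<in> D\<close>] by metis
  have "(\<Sum>a\<in>C. vandermonde C (x(a := x b)) * vandermonde D (x(b := x a))) =
      vandermonde C x * (\<Sum>a\<in>C. (\<Prod>m\<in>C - {a}. (x b - x m) / (x a - x m)) * poly p (x a))"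
    using C inj by (simp add: vandermonde_fun_upd_ratio p sum_distrib_left mult_ac)
  also have "\<dots> = vandermonde C x * poly p (x b)"
    using deg \<open>card D \<le> card C\<close> by (simp add: lagrange_interpolation[OF C inj])
  also have "\<dots> = vandermonde C x * vandermonde D x"
    by (simp flip: p)
  finally show ?thesis .
qed

lemma sum_sum_vandermonde_exchange:
  fixes x :: "'a::linorder \<Rightarrow> 'b::field"
  assumes C: "finite C" and D: "finite D" and inj: "inj_on x (C \<union> D)"
  shows "(\<Sum>a\<in>C. \<Sum>b\<in>D. vandermonde C (x(a := x b)) * vandermonde D (x(b := x a))) =
    of_nat (min (card C) (card D)) * (vandermonde C x * vandermonde D x)"
proof (cases "card D \<le> card C")
  case True
  have "(\<Sum>a\<in>C. \<Sum>b\<in>D. vandermonde C (x(a := x b)) * vandermonde D (x(b := x a))) =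
      (\<Sum>b\<in>D. \<Sum>a\<in>C. vandermonde C (x(a := x b)) * vandermonde D (x(b := x a)))"
    by (rule sum.swap)
  also have "\<dots> = (\<Sum>b\<in>D. vandermonde C x * vandermonde D x)"
    using assms True by (intro sum.cong refl sum_vandermonde_exchange) (auto intro: inj_on_subset)
  finally show ?thesis
    using True by simp
next
  case False
  have "(\<Sum>a\<in>C. \<Sum>b\<in>D. vandermonde D (x(b := x a)) * vandermonde C (x(a := x b))) =
      (\<Sum>a\<in>C. vandermonde D x * vandermonde C x)"
    using assms False by (intro sum.cong refl sum_vandermonde_exchange) (auto intro: inj_on_subset)
  then show ?thesis
    using False by (simp add: mult.commute)
qed

section \<open>Specht polynomials\<close>

definition specht :: "'a::linorder set list \<Rightarrow> ('a \<Rightarrow> 'b::comm_ring_1) \<Rightarrow> 'b" where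
  "specht Cs x = (\<Prod>c<length Cs. vandermonde (Cs ! c) x)"

lemma specht_split:
  assumes "c < length Cs" and "d < length Cs" and "c \<noteq> d"
  shows "specht Cs x =
    vandermonde (Cs ! c) x * vandermonde (Cs ! d) x * (\<Prod>e\<in>{..<length Cs} - {c, d}. vandermonde (Cs ! e) x)"
proof -
  have "{..<length Cs} - {c, d} = {..<length Cs} - {c} - {d}"
    by auto
  with assms show ?thesis
    unfolding specht_def by (simp add: prod.remove[of _ c] prod.remove[of _ d] mult.assoc)
qed

(* For the column lengths of a Young diagram this is twice its content sum, i.e. the number of
   ordered pairs of cells in a common row minus those in a common column: columns of lengths p and q
   share min p q rows, and a column of length p holds p (p - 1) ordered pairs. *)
definition twice_content :: "nat list \<Rightarrow> int" where
  "twice_content cs = (\<Sum>c<length cs. \<Sum>d<length cs.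
     if c = d then - int (cs ! c) * (int (cs ! c) - 1) else int (min (cs ! c) (cs ! d)))"

locale column_partition =
  fixes I :: "'a::linorder set" and Cs :: "'a set list"
  assumes finite_carrier: "finite I"
    and columns_disjoint: "disjoint_family_on (nth Cs) {..<length Cs}"
    and columns_cover: "\<Union>(set Cs) = I"
begin

lemma column_subset: "c < length Cs \<Longrightarrow> Cs ! c \<subseteq> I"
  using columns_cover nth_mem by blast

lemma finite_column: "c < length Cs \<Longrightarrow> finite (Cs ! c)"
  using column_subset finite_carrier finite_subset by blast

lemma not_in_other_column:
  "c < length Cs \<Longrightarrow> d < length Cs \<Longrightarrow> c \<noteq> d \<Longrightarrow> a \<in> Cs ! c \<Longrightarrow> a \<notin> Cs ! d"
  using columns_disjoint by (auto simp: disjoint_family_on_def)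

lemma sum_by_columns: "(\<Sum>a\<in>I - A. f a) = (\<Sum>c<length Cs. \<Sum>a\<in>Cs ! c - A. f a)"
proof -
  have "I - A = (\<Union>c<length Cs. Cs ! c - A)"
    using columns_cover by (auto simp: in_set_conv_nth) (metis nth_mem)
  also have "sum f \<dots> = (\<Sum>c<length Cs. \<Sum>a\<in>Cs ! c - A. f a)"
  proof (rule sum.UNION_disjoint)
    show "\<forall>c\<in>{..<length Cs}. \<forall>d\<in>{..<length Cs}. c \<noteq> d \<longrightarrow> (Cs ! c - A) \<inter> (Cs ! d - A) = {}"
      by (auto dest: not_in_other_column)
  qed (simp_all add: finite_column)
  finally show ?thesis .
qed

lemma specht_nonzero:
  fixes x :: "'a \<Rightarrow> 'b::idom"
  assumes "inj_on x I"
  shows "specht Cs x \<noteq> 0"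
  using assms by (auto simp: specht_def finite_column column_subset vandermonde_nonzero inj_on_subset)

lemma specht_transpose_same_column:
  assumes c: "c < length Cs" and "a \<in> Cs ! c" and "b \<in> Cs ! c" and "a \<noteq> b"
  shows "specht Cs (x \<circ> transpose a b) = - specht Cs x"
proof -
  have "vandermonde (Cs ! e) (x \<circ> transpose a b) = vandermonde (Cs ! e) x"
    if "e \<in> {..<length Cs} - {c}" for e
    using that assms not_in_other_column[of c e a] not_in_other_column[of c e b]
    by (intro vandermonde_cong) (auto simp: transpose_def)
  then have "(\<Prod>e\<in>{..<length Cs} - {c}. vandermonde (Cs ! e) (x \<circ> transpose a b)) =
      (\<Prod>e\<in>{..<length Cs} - {c}. vandermonde (Cs ! e) x)"
    by (rule prod.cong[OF refl])
  with assms show ?thesis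
    by (simp add: specht_def prod.remove[of _ c] vandermonde_swap[OF finite_column[OF c]])
qed

lemma specht_transpose_two_columns:
  assumes c: "c < length Cs" and d: "d < length Cs" and "c \<noteq> d" and a: "a \<in> Cs ! c" and b: "b \<in> Cs ! d"
  shows "specht Cs (x \<circ> transpose a b) = vandermonde (Cs ! c) (x(a := x b)) *
    vandermonde (Cs ! d) (x(b := x a)) * (\<Prod>e\<in>{..<length Cs} - {c, d}. vandermonde (Cs ! e) x)"
proof -
  have "(\<Prod>e\<in>{..<length Cs} - {c, d}. vandermonde (Cs ! e) (x \<circ> transpose a b)) =
      (\<Prod>e\<in>{..<length Cs} - {c, d}. vandermonde (Cs ! e) x)"
  proof (rule prod.cong[OF refl])
    fix e assume "e \<in> {..<length Cs} - {c, d}"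
    with assms not_in_other_column[of c e a] not_in_other_column[of d e b]
    show "vandermonde (Cs ! e) (x \<circ> transpose a b) = vandermonde (Cs ! e) x"
      by (intro vandermonde_cong) (auto simp: transpose_def)
  qed
  moreover have "vandermonde (Cs ! c) (x \<circ> transpose a b) = vandermonde (Cs ! c) (x(a := x b))"
    using assms not_in_other_column[of d c b] by (intro vandermonde_cong) (auto simp: transpose_def)
  moreover have "vandermonde (Cs ! d) (x \<circ> transpose a b) = vandermonde (Cs ! d) (x(b := x a))"
    using assms not_in_other_column[of c d a] by (intro vandermonde_cong) (auto simp: transpose_def)
  ultimately show ?thesis
    using specht_split[OF c d \<open>c \<noteq> d\<close>, of "x \<circ> transpose a b"] by simp
qed

lemma sum_specht_transpose_same_column:
  assumes c: "c < length Cs"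
  shows "(\<Sum>a\<in>Cs ! c. \<Sum>b\<in>Cs ! c - {a}. specht Cs (x \<circ> transpose a b)) =
    of_int (- int (card (Cs ! c)) * (int (card (Cs ! c)) - 1)) * specht Cs x"
proof -
  have "(\<Sum>a\<in>Cs ! c. \<Sum>b\<in>Cs ! c - {a}. specht Cs (x \<circ> transpose a b)) =
      (\<Sum>a\<in>Cs ! c. of_nat (card (Cs ! c) - 1) * - specht Cs x)"
  proof (intro sum.cong refl)
    fix a assume a: "a \<in> Cs ! c"
    have "(\<Sum>b\<in>Cs ! c - {a}. specht Cs (x \<circ> transpose a b)) = (\<Sum>b\<in>Cs ! c - {a}. - specht Cs x)"
      using a by (intro sum.cong refl) (auto intro: specht_transpose_same_column[OF c])
    with a finite_column[OF c] show "(\<Sum>b\<in>Cs ! c - {a}. specht Cs (x \<circ> transpose a b)) =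
        of_nat (card (Cs ! c) - 1) * - specht Cs x"
      by simp
  qed
  also have "\<dots> = of_int (- int (card (Cs ! c)) * (int (card (Cs ! c)) - 1)) * specht Cs x"
    by (cases "card (Cs ! c)") (simp_all add: algebra_simps)
  finally show ?thesis .
qed

lemma sum_specht_transpose_two_columns:
  fixes x :: "'a \<Rightarrow> 'b::field"
  assumes inj: "inj_on x I" and c: "c < length Cs" and d: "d < length Cs" and "c \<noteq> d"
  shows "(\<Sum>a\<in>Cs ! c. \<Sum>b\<in>Cs ! d - {a}. specht Cs (x \<circ> transpose a b)) =
    of_nat (min (card (Cs ! c)) (card (Cs ! d))) * specht Cs x"
proof -
  let ?R = "\<Prod>e\<in>{..<length Cs} - {c, d}. vandermonde (Cs ! e) x"
  have "(\<Sum>a\<in>Cs ! c. \<Sum>b\<in>Cs ! d - {a}. specht Cs (x \<circ> transpose a b)) =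
      (\<Sum>a\<in>Cs ! c. \<Sum>b\<in>Cs ! d. vandermonde (Cs ! c) (x(a := x b)) * vandermonde (Cs ! d) (x(b := x a))) * ?R"
    using assms not_in_other_column[of c d]
    by (simp add: specht_transpose_two_columns sum_distrib_right cong: sum.cong)
  also have "\<dots> = of_nat (min (card (Cs ! c)) (card (Cs ! d))) * specht Cs x"
    using assms column_subset[OF c] column_subset[OF d]
    by (simp add: sum_sum_vandermonde_exchange finite_column inj_on_subset specht_split mult.assoc)
  finally show ?thesis .
qed

lemma sum_specht_transpositions:
  fixes x :: "'a \<Rightarrow> 'b::field"
  assumes inj: "inj_on x I"
  shows "(\<Sum>a\<in>I. \<Sum>b\<in>I - {a}. specht Cs (x \<circ> transpose a b)) =
    of_int (twice_content (map card Cs)) * specht Cs x"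
proof -
  let ?L = "length Cs"
  let ?F = "\<lambda>a b. specht Cs (x \<circ> transpose a b)"
  let ?w = "\<lambda>c d. if c = d then - int (card (Cs ! c)) * (int (card (Cs ! c)) - 1)
                   else int (min (card (Cs ! c)) (card (Cs ! d)))"
  have "(\<Sum>a\<in>I. \<Sum>b\<in>I - {a}. ?F a b) = (\<Sum>c<?L. \<Sum>a\<in>Cs ! c. \<Sum>d<?L. \<Sum>b\<in>Cs ! d - {a}. ?F a b)"
    using sum_by_columns[where A = "{}"] by (simp add: sum_by_columns)
  also have "\<dots> = (\<Sum>c<?L. \<Sum>d<?L. \<Sum>a\<in>Cs ! c. \<Sum>b\<in>Cs ! d - {a}. ?F a b)"
    by (intro sum.cong refl sum.swap)
  also have "\<dots> = (\<Sum>c<?L. \<Sum>d<?L. of_int (?w c d) * specht Cs x)"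
    using inj by (intro sum.cong refl)
      (simp add: sum_specht_transpose_same_column sum_specht_transpose_two_columns)
  also have "\<dots> = of_int (twice_content (map card Cs)) * specht Cs x"
    unfolding twice_content_def of_int_sum sum_distrib_right length_map by (intro sum.cong refl) simp
  finally show ?thesis .
qed

end

section \<open>Eigenvalues of the transposition graph\<close>

lemma sum_cayley_adj:
  assumes "finite G" and "inj g" and "\<And>s. s \<in> S \<Longrightarrow> g \<circ> s \<in> G"
  shows "(\<Sum>h\<in>G. cayley_adj S g h * F h) = (\<Sum>s\<in>S. F (g \<circ> s))"
proof -
  have "cayley_adj S g h * F h = (if h \<in> (\<circ>) g ` S then F h else 0)" for h
    by (auto simp: cayley_adj_def)
  then have "(\<Sum>h\<in>G. cayley_adj S g h * F h) = sum F (G \<inter> (\<circ>) g ` S)"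
    using assms by (simp add: sum.inter_restrict)
  also have "G \<inter> (\<circ>) g ` S = (\<circ>) g ` S"
    using assms by auto
  also have "sum F ((\<circ>) g ` S) = (\<Sum>s\<in>S. F (g \<circ> s))"
    using assms by (simp add: sum.reindex inj_on_subset[OF fun.inj_map])
  finally show ?thesis .
qed

lemma transpose_eq_transpose_ordered:
  fixes a b c d :: "'a::linorder"
  assumes "a < b" and "c < d" and "transpose a b = transpose c d"
  shows "a = c \<and> b = d"
  using assms by (metis transpose_eq_iff transpose_apply_first transpose_apply_second less_asym)

lemma sum_transpositions:
  fixes G :: "(nat \<Rightarrow> nat) \<Rightarrow> 'b::semiring_1"
  shows "2 * (\<Sum>t\<in>transpositions n. G t) = (\<Sum>a<n. \<Sum>b\<in>{..<n} - {a}. G (transpose a b))"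
proof -
  let ?P = "{(a, b). a < b \<and> b < n}"
  let ?g = "\<lambda>(a, b). G (transpose a b)"
  have finite_P: "finite ?P"
    by (rule finite_subset[of _ "{..<n} \<times> {..<n}"]) auto
  have "transpositions n = (\<lambda>(a, b). transpose a b) ` ?P"
  proof
    show "transpositions n \<subseteq> (\<lambda>(a, b). transpose a b) ` ?P"
      unfolding transpositions_def by (auto simp: image_iff) (metis linorder_neqE_nat transpose_commute)
    show "(\<lambda>(a, b). transpose a b) ` ?P \<subseteq> transpositions n"
      unfolding transpositions_def by fastforce
  qed
  moreover have "inj_on (\<lambda>(a, b). transpose a b) ?P"
    by (auto simp: inj_on_def dest: transpose_eq_transpose_ordered)
  ultimately have "(\<Sum>t\<in>transpositions n. G t) = sum ?g ?P"
    by (simp add: sum.reindex case_prod_beta')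
  moreover have "sum ?g (prod.swap ` ?P) = sum ?g ?P"
    by (simp add: sum.reindex case_prod_beta' transpose_commute)
  moreover have "(\<Sum>a<n. \<Sum>b\<in>{..<n} - {a}. G (transpose a b)) = sum ?g (?P \<union> prod.swap ` ?P)"
  proof -
    have "Sigma {..<n} (\<lambda>a. {..<n} - {a}) = ?P \<union> prod.swap ` ?P"
      by (auto simp: image_iff)
    then show ?thesis
      by (simp add: sum.Sigma)
  qed
  moreover have "sum ?g (?P \<union> prod.swap ` ?P) = sum ?g ?P + sum ?g (prod.swap ` ?P)"
    using finite_P by (intro sum.union_disjoint) auto
  ultimately show ?thesis
    by (simp add: mult_2)
qed

lemma transposition_permutes: "t \<in> transpositions n \<Longrightarrow> t permutes {0..<n}"
  by (auto simp: transpositions_def permutes_swap_id)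

lemma is_eigenvalue_transposition_graphI:
  assumes "g\<^sub>0 \<in> Sym n" and "F g\<^sub>0 \<noteq> 0"
    and "\<And>g. g \<in> Sym n \<Longrightarrow> (\<Sum>t\<in>transpositions n. F (g \<circ> t)) = \<mu> * F g"
  shows "is_eigenvalue (Sym n) (cayley_adj (transpositions n)) \<mu>"
  unfolding is_eigenvalue_def
proof (intro exI conjI ballI)
  show "\<exists>g\<in>Sym n. F g \<noteq> 0"
    using assms by blast
  fix g assume g: "g \<in> Sym n"
  then show "(\<Sum>h\<in>Sym n. cayley_adj (transpositions n) g h * F h) = \<mu> * F g"
    using assms(3)[OF g] by (subst sum_cayley_adj)
      (auto simp: Sym_def finite_permutations permutes_inj intro: permutes_compose transposition_permutes)
qed

lemma sum_transpositions_specht: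
  assumes "column_partition {..<n} Cs" and g: "g \<in> Sym n"
  shows "(\<Sum>t\<in>transpositions n. specht Cs (real \<circ> (g \<circ> t))) =
    real_of_int (twice_content (map card Cs)) / 2 * specht Cs (real \<circ> g)"
proof -
  interpret column_partition "{..<n}" Cs by fact
  have "inj g"
    using g by (simp add: Sym_def permutes_inj)
  then have "inj_on (real \<circ> g) {..<n}"
    by (auto simp: inj_on_def dest: injD)
  then have "2 * (\<Sum>t\<in>transpositions n. specht Cs (real \<circ> (g \<circ> t))) =
      real_of_int (twice_content (map card Cs)) * specht Cs (real \<circ> g)"
    using sum_transpositions[of "\<lambda>t. specht Cs (real \<circ> (g \<circ> t))" n]
    by (simp add: o_assoc sum_specht_transpositions)
  then show ?thesis
    by simp
qed

lemma transposition_graph_eigenvalues: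
  assumes "column_partition {..<n} Cs"
  shows "is_eigenvalue (Sym n) (cayley_adj (transpositions n)) (real_of_int (twice_content (map card Cs)) / 2)"
    and "is_eigenvalue (Sym n) (cayley_adj (transpositions n)) (- (real_of_int (twice_content (map card Cs)) / 2))"
proof -
  interpret column_partition "{..<n}" Cs by fact
  let ?ev = "real_of_int (twice_content (map card Cs)) / 2"
  have id: "id \<in> Sym n"
    by (simp add: Sym_def permutes_id)
  have nonzero: "specht Cs (real \<circ> id) \<noteq> 0"
    by (rule specht_nonzero) (simp add: inj_on_def)
  show "is_eigenvalue (Sym n) (cayley_adj (transpositions n)) ?ev"
    using assms
    by (intro is_eigenvalue_transposition_graphI[where F = "\<lambda>g. specht Cs (real \<circ> g)", OF id nonzero]
        sum_transpositions_specht)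
  have sign: "sign (g \<circ> t) = - sign g" if "g \<in> Sym n" and "t \<in> transpositions n" for g t
  proof -
    from that have "permutation g"
      by (auto simp: Sym_def intro: permutes_imp_permutation)
    with that show ?thesis
      by (auto simp: transpositions_def sign_compose permutation_swap_id sign_swap_id)
  qed
  show "is_eigenvalue (Sym n) (cayley_adj (transpositions n)) (- ?ev)"
  proof (rule is_eigenvalue_transposition_graphI[OF id,
        where F = "\<lambda>g. real_of_int (sign g) * specht Cs (real \<circ> g)"])
    show "real_of_int (sign id) * specht Cs (real \<circ> id) \<noteq> 0"
      using nonzero by simp
    fix g assume g: "g \<in> Sym n"
    then show "(\<Sum>t\<in>transpositions n. real_of_int (sign (g \<circ> t)) * specht Cs (real \<circ> (g \<circ> t))) =
        - ?ev * (real_of_int (sign g) * specht Cs (real \<circ> g))"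
      using sum_transpositions_specht[OF assms g] by (simp add: sign sum_negf flip: sum_distrib_left)
  qed
qed

section \<open>Young diagrams in Frobenius coordinates\<close>

fun consecutive_blocks :: "nat \<Rightarrow> nat list \<Rightarrow> nat set list" where
  "consecutive_blocks i [] = []"
| "consecutive_blocks i (a # cs) = {i..<i + a} # consecutive_blocks (i + a) cs"

lemma map_card_consecutive_blocks: "map card (consecutive_blocks i cs) = cs"
  by (induction cs arbitrary: i) auto

lemma consecutive_blocks_atLeast:
  "k < length (consecutive_blocks i cs) \<Longrightarrow> x \<in> consecutive_blocks i cs ! k \<Longrightarrow> i \<le> x"
proof (induction cs arbitrary: i k)
  case (Cons a cs)
  then show ?case
    by (cases k) fastforce+
qed simp

lemma Union_consecutive_blocks: "\<Union>(set (consecutive_blocks i cs)) = {i..<i + sum_list cs}"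
  by (induction cs arbitrary: i) (simp_all add: ivl_disj_un_two(3) add.assoc)

lemma disjoint_family_consecutive_blocks:
  "disjoint_family_on (nth (consecutive_blocks i cs)) {..<length (consecutive_blocks i cs)}"
proof (induction cs arbitrary: i)
  case Nil
  then show ?case
    by (simp add: disjoint_family_on_def)
next
  case (Cons a cs)
  let ?Bs = "consecutive_blocks (i + a) cs"
  have first: "{i..<i + a} \<inter> ?Bs ! k = {}" "?Bs ! k \<inter> {i..<i + a} = {}" if "k < length ?Bs" for k
    using consecutive_blocks_atLeast[OF that] by fastforce+
  show ?case
    unfolding disjoint_family_on_def
  proof (intro ballI impI)
    fix c d
    assume "c \<in> {..<length (consecutive_blocks i (a # cs))}" "d \<in> {..<length (consecutive_blocks i (a # cs))}"
      and "c \<noteq> d"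
    with Cons.IH[of "i + a"] first
    show "consecutive_blocks i (a # cs) ! c \<inter> consecutive_blocks i (a # cs) ! d = {}"
      by (cases c; cases d) (simp_all add: disjoint_family_on_def)
  qed
qed

lemma column_partition_consecutive_blocks: "column_partition {..<sum_list cs} (consecutive_blocks 0 cs)"
  by unfold_locales (simp_all add: disjoint_family_consecutive_blocks Union_consecutive_blocks atLeast0LessThan)

lemma twice_content_Nil [simp]: "twice_content [] = 0"
  by (simp add: twice_content_def)

lemma twice_content_Cons [simp]:
  "twice_content (a # cs) = twice_content cs + 2 * (\<Sum>c\<leftarrow>cs. int (min a c)) - int a * (int a - 1)"
proof -
  have "twice_content (a # cs) = - int a * (int a - 1) + (\<Sum>d<length cs. int (min a (cs ! d))) +
      ((\<Sum>c<length cs. int (min (cs ! c) a)) + twice_content cs)"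
    unfolding twice_content_def length_Cons sum.lessThan_Suc_shift nth_Cons_0 nth_Cons_Suc
    by (simp add: sum.distrib)
  also have "(\<Sum>d<length cs. int (min a (cs ! d))) = (\<Sum>c\<leftarrow>cs. int (min a c))"
    by (simp add: sum_list_sum_nth atLeast0LessThan)
  also have "(\<Sum>c<length cs. int (min (cs ! c) a)) = (\<Sum>c\<leftarrow>cs. int (min a c))"
    by (simp add: sum_list_sum_nth atLeast0LessThan min.commute)
  finally show ?thesis
    by simp
qed

lemma twice_content_append:
  "twice_content (xs @ ys) = twice_content xs + twice_content ys + 2 * (\<Sum>x\<leftarrow>xs. \<Sum>y\<leftarrow>ys. int (min x y))"
  by (induction xs) (auto simp: algebra_simps)

lemma twice_content_map_Suc:
  "twice_content (map Suc cs) =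
    twice_content cs + int (length cs) * (int (length cs) - 1) - 2 * int (sum_list cs)"
proof (induction cs)
  case (Cons a cs)
  have "(\<Sum>c\<leftarrow>map Suc cs. int (min (Suc a) c)) = (\<Sum>c\<leftarrow>cs. int (min a c)) + int (length cs)"
    by (induction cs) auto
  with Cons show ?case
    by (simp add: algebra_simps)
qed simp

lemma twice_content_replicate_1: "twice_content (replicate k 1) = int k * (int k - 1)"
proof (induction k)
  case (Suc k)
  have "(\<Sum>c\<leftarrow>replicate k 1. int (min 1 c)) = int k"
    by (induction k) auto
  with Suc show ?case
    by (simp add: algebra_simps)
qed simp

(* Column lengths of the diagram whose diagonal hooks have arms and legs (a, b): the outer hook
   contributes a first column of length b + 1, shifts the inner diagram one row down and one
   column right, and completes its arm by columns of length one. *)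
fun frobenius_columns :: "(nat \<times> nat) list \<Rightarrow> nat list" where
  "frobenius_columns [] = []"
| "frobenius_columns ((a, b) # hs) =
    Suc b # map Suc (frobenius_columns hs) @ replicate (a - length (frobenius_columns hs)) 1"

definition frobenius_valid :: "(nat \<times> nat) list \<Rightarrow> bool" where
  "frobenius_valid hs \<longleftrightarrow> sorted_wrt (>) (map fst hs) \<and> sorted_wrt (>) (map snd hs)"

lemma frobenius_valid_Cons:
  "frobenius_valid ((a, b) # hs) \<longleftrightarrow> frobenius_valid hs \<and> (\<forall>h\<in>set hs. fst h < a \<and> snd h < b)"
  by (auto simp: frobenius_valid_def)

lemma frobenius_columns_inner_bounds:
  "frobenius_valid ((a, b) # hs) \<Longrightarrow>
    length (frobenius_columns hs) \<le> a \<and> (\<forall>c\<in>set (frobenius_columns hs). c \<le> b)"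
proof (induction hs arbitrary: a b)
  case (Cons h hs)
  obtain a' b' where h: "h = (a', b')"
    by fastforce
  with Cons.prems have "frobenius_valid ((a', b') # hs)" "a' < a" "b' < b"
    by (auto simp: frobenius_valid_Cons)
  with Cons.IH[of a' b'] show ?case
    by (fastforce simp: h)
qed simp

lemma sum_list_frobenius_columns:
  "frobenius_valid hs \<Longrightarrow> sum_list (frobenius_columns hs) = (\<Sum>(a, b)\<leftarrow>hs. a + b + 1)"
proof (induction hs rule: frobenius_columns.induct)
  case (2 a b hs)
  have "sum_list (map Suc xs) = sum_list xs + length xs" for xs
    by (induction xs) auto
  with 2 frobenius_columns_inner_bounds[OF "2.prems"] show ?case
    by (simp add: frobenius_valid_Cons sum_list_replicate)
qed simp

lemma twice_content_frobenius_columns: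
  "frobenius_valid hs \<Longrightarrow>
    twice_content (frobenius_columns hs) = (\<Sum>(a, b)\<leftarrow>hs. int a * (int a + 1) - int b * (int b + 1))"
proof (induction hs rule: frobenius_columns.induct)
  case (2 a b hs)
  let ?r = "frobenius_columns hs"
  let ?L = "length ?r"
  from frobenius_columns_inner_bounds[OF "2.prems"] obtain k where a: "a = ?L + k" and r_le_b: "\<forall>c\<in>set ?r. c \<le> b"
    using le_Suc_ex by blast
  have columns: "frobenius_columns ((a, b) # hs) = Suc b # map Suc ?r @ replicate k 1"
    by (simp add: a)
  have "(\<Sum>c\<leftarrow>map Suc xs. int (min (Suc b) c)) = int (sum_list xs) + int (length xs)"
    if "\<forall>c\<in>set xs. c \<le> b" for xs
    using that by (induction xs) auto
  moreover have "(\<Sum>c\<leftarrow>replicate j 1. int (min (Suc b) c)) = int j" for j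
    by (induction j) auto
  ultimately have first_column: "(\<Sum>c\<leftarrow>map Suc ?r @ replicate k 1. int (min (Suc b) c)) =
      int (sum_list ?r) + int ?L + int k"
    using r_le_b by simp
  have "(\<Sum>y\<leftarrow>replicate k 1. int (min (Suc x) y)) = int k" for x
    by (induction k) auto
  then have "(\<Sum>x\<leftarrow>map Suc xs. \<Sum>y\<leftarrow>replicate k 1. int (min x y)) = int (length xs) * int k" for xs
    by (induction xs) (auto simp: algebra_simps)
  with first_column have "twice_content (frobenius_columns ((a, b) # hs)) =
      twice_content ?r + int a * (int a + 1) - int b * (int b + 1)"
    unfolding columns twice_content_Cons twice_content_append twice_content_map_Suc twice_content_replicate_1
    by (simp add: a algebra_simps)
  with 2 show ?case
    by (simp add: frobenius_valid_Cons)
qed simp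

section \<open>Partitions with prescribed content sum\<close>

(* A hook with arm a and leg b has a + b + 1 cells with content sum (a (a + 1) - b (b + 1)) / 2. *)
definition content_realizable :: "nat \<Rightarrow> nat \<Rightarrow> bool" where
  "content_realizable n k \<longleftrightarrow> (\<exists>hs. frobenius_valid hs \<and> (\<Sum>(a, b)\<leftarrow>hs. a + b + 1) = n \<and>
     (\<Sum>(a, b)\<leftarrow>hs. int a * (int a + 1) - int b * (int b + 1)) = 2 * int k)"

lemma content_realizableI:
  assumes "frobenius_valid hs" and "(\<Sum>(a, b)\<leftarrow>hs. a + b + 1) = n"
    and "(\<Sum>(a, b)\<leftarrow>hs. int a * (int a + 1) - int b * (int b + 1)) = 2 * int k"
  shows "content_realizable n k"
  unfolding content_realizable_def using assms by (intro exI[of _ hs] conjI)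

lemma content_realizable_eigenvalues:
  assumes "content_realizable n k"
  shows "is_eigenvalue (Sym n) (cayley_adj (transpositions n)) (real k)"
    and "is_eigenvalue (Sym n) (cayley_adj (transpositions n)) (- real k)"
proof -
  obtain hs where hs: "frobenius_valid hs" "(\<Sum>(a, b)\<leftarrow>hs. a + b + 1) = n"
    "(\<Sum>(a, b)\<leftarrow>hs. int a * (int a + 1) - int b * (int b + 1)) = 2 * int k"
    using assms unfolding content_realizable_def by blast
  let ?cs = "frobenius_columns hs"
  have "sum_list ?cs = n" and "twice_content (map card (consecutive_blocks 0 ?cs)) = 2 * int k"
    using hs by (simp_all add: sum_list_frobenius_columns twice_content_frobenius_columns
        map_card_consecutive_blocks)
  then show "is_eigenvalue (Sym n) (cayley_adj (transpositions n)) (real k)"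
    and "is_eigenvalue (Sym n) (cayley_adj (transpositions n)) (- real k)"
    using transposition_graph_eigenvalues[OF column_partition_consecutive_blocks[of ?cs]] by simp_all
qed

lemma content_realizable_odd:
  assumes "8 \<le> s" and "k < s"
  shows "content_realizable (2 * s + 3) k"
proof -
  consider (zero) "k = 0" | (small) "1 \<le> k" "2 * k \<le> s" | (large) "s + 3 \<le> 2 * k"
    | (half) "2 * k = s + 1" | (half_plus) "2 * k = s + 2"
    by linarith
  then show ?thesis
  proof cases
    case zero
    then show ?thesis
      by (intro content_realizableI[of "[(s + 1, s + 1)]"]) (simp_all add: frobenius_valid_def)
  next
    case small
    then show ?thesis
      by (intro content_realizableI[of "[(s + 1 - k, s + 1 - k), (k, k - 1)]"])
        (auto simp: frobenius_valid_def of_nat_diff algebra_simps)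
  next
    case large
    with assms show ?thesis
      by (intro content_realizableI[of "[(k, k - 1), (s + 1 - k, s + 1 - k)]"])
        (auto simp: frobenius_valid_def of_nat_diff algebra_simps)
  next
    case half
    with assms show ?thesis
      by (intro content_realizableI[of "[(s + 1 - k, s + 1 - k), (k - 1, k - 2), (1, 0)]"])
        (auto simp: frobenius_valid_def of_nat_diff algebra_simps)
  next
    case half_plus
    with assms show ?thesis
      by (intro content_realizableI[of "[(s + 1 - k, s + 1 - k), (k - 2, k - 3), (2, 1)]"])
        (auto simp: frobenius_valid_def of_nat_diff algebra_simps)
  qed
qed

lemma content_realizable_even:
  assumes "8 \<le> u" and "k \<le> u"
  shows "content_realizable (2 * u + 4) k"
proof -
  consider (zero) "k = 0" | (one) "k = 1" | (small) "2 \<le> k" "2 * k \<le> u" | (large) "u + 3 \<le> 2 * k"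
    | (half) "u + 1 \<le> 2 * k" "2 * k \<le> u + 2"
    by linarith
  then show ?thesis
  proof cases
    case zero
    then show ?thesis
      by (intro content_realizableI[of "[(u + 1, u + 1), (0, 0)]"]) (simp_all add: frobenius_valid_def)
  next
    case one
    with assms show ?thesis
      by (intro content_realizableI[of "[(u - 2, u - 2), (2, 2), (1, 0)]"])
        (auto simp: frobenius_valid_def of_nat_diff algebra_simps)
  next
    case small
    then show ?thesis
      by (intro content_realizableI[of "[(u + 1 - k, u + 1 - k), (k, k - 1), (0, 0)]"])
        (auto simp: frobenius_valid_def of_nat_diff algebra_simps)
  next
    case large
    with assms show ?thesis
      by (intro content_realizableI[of "[(k, k - 1), (u + 1 - k, u + 1 - k), (0, 0)]"])
        (auto simp: frobenius_valid_def of_nat_diff algebra_simps)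
  next
    case half
    with assms show ?thesis
      by (intro content_realizableI[of "[(k, k - 1), (k - 2, k - 2), (u + 3 - 2 * k, u + 3 - 2 * k)]"])
        (auto simp: frobenius_valid_def of_nat_diff algebra_simps)
  qed
qed

lemma content_realizable:
  assumes "19 \<le> n" and "2 * k + 4 \<le> n"
  shows "content_realizable n k"
proof (cases "even n")
  case True
  define u where "u = n div 2 - 2"
  have n: "n = 2 * u + 4"
    using True assms(1) unfolding u_def by presburger
  have "content_realizable (2 * u + 4) k"
    by (rule content_realizable_even) (use assms n in linarith)+
  then show ?thesis
    by (simp only: n)
next
  case False
  define s where "s = (n - 3) div 2"
  have n: "n = 2 * s + 3"
    using False assms(1) unfolding s_def by presburger
  have "content_realizable (2 * s + 3) k"
    by (rule content_realizable_odd) (use assms n in linarith)+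
  then show ?thesis
    by (simp only: n)
qed

theorem theorem3:
  fixes n :: nat and m :: int
  assumes "n \<ge> 19"
    and "- (real n - 4) / 2 \<le> real_of_int m" and "real_of_int m \<le> (real n - 4) / 2"
  shows "is_eigenvalue (Sym n) (cayley_adj (transpositions n)) (real_of_int m)"
proof -
  have "\<bar>real_of_int m\<bar> \<le> (real n - 4) / 2"
    unfolding abs_le_iff using assms(2,3) by linarith
  then have "real (2 * nat \<bar>m\<bar> + 4) \<le> real n"
    by simp
  then have "content_realizable n (nat \<bar>m\<bar>)"
    using assms(1) by (intro content_realizable) (simp_all only: of_nat_le_iff)
  then show ?thesis
    using content_realizable_eigenvalues[of n "nat \<bar>m\<bar>"] by (cases "0 \<le> m") simp_all
qed

end
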